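(* Let $N:\Sigma\to c(X)$ be a positive multimeasure (i.e. $0\in N(E)$ for every $E\in\Sigma$). Let $f,g:\Omega\to\mathbb R$ be measurable functions that are $BDS_m$-integrable with respect to $N$, let $a,b\ge 0$, and assume that $af+bg$ is also $BDS_m$-integrable with respect to $N$. Then for every $E\in\Sigma$ and every $x'\in X'$, $$ s\Big(x',\int_E (af+bg)\,dN\Big)\le a\, s\Big(x',\int_E f\,dN\Big)+b\, s\Big(x',\int_E g\,dN\Big), $$ equivalently $\int_E(af+bg)\,dN\subseteq \overline{a\int_E f\,dN+b\int_E g\,dN}$; i.e. the $BDS_m$-integral with respect to $N$ is a sublinear function of the integrand.
   Context: $(\Omega,\Sigma)$ is a measurable space and $X$ is a Hausdorff locally convex space with dual $X'$. $c(X)$ is the family of nonempty closed convex subsets of $X$. For $C\in c(X)$ and $x'\in X'$, the support function is $s(x',C)=\sup\{\langle x',x\rangle: x\in C\}\in(-\infty,+\infty]$. A multimeasure is a map $M:\Sigma\to c(X)$ such that for every $x'\in X'$ the set function $E\mapsto s(x',M(E))$ is a $\sigma$-finite countably additive measure with values in $(-\infty,+\infty]$. For a multimeasure $N$, $-N$ denotes $E\mapsto -N(E)=\{-x:x\in N(E)\}$, so $s(x',-N(E))=s(-x',N(E))$. $BDS_m$-integral: a measurable $f:\Omega\to\mathbb R$ is $BDS_m$-integrable with respect to $N$ (in $c(X)$) if for every $E\in\Sigma$ and $x'\in X'$ the expression $\int_E f^+\,ds(x',N)+\int_E f^-\,ds(x',-N)$ makes sense, and for every $E\in\Sigma$ there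 is $M_f(E)\in c(X)$ with $s(x',M_f(E))=\int_E f^+\,ds(x',N)+\int_E f^-\,ds(x',-N)$ for all $x'\in X'$; one writes $\int_E f\,dN:=M_f(E)$. (For $f\ge 0$ this reads $s(x',\int_E f\,dN)=\int_E f\,ds(x',N)$.) For sets $A,B$, $\overline{A+B}$ is the closure of the Minkowski sum. *)

theory Defs
  imports "HOL-Analysis.Analysis"
begin

definition hlcs :: "'x::{real_vector,t2_space} itself \<Rightarrow> bool" where
  "hlcs _ \<longleftrightarrow>
     continuous_on UNIV (\<lambda>p::'x \<times> 'x. fst p + snd p) \<and>
     continuous_on UNIV (\<lambda>p::real \<times> 'x. fst p *\<^sub>R snd p) \<and>
     (\<forall>U::'x set. open U \<and> 0 \<in> U \<longrightarrow> (\<exists>V. open V \<and> convex V \<and> 0 \<in> V \<and> V \<subseteq> U))"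

definition tdual :: "('x::{real_vector,topological_space} \<Rightarrow> real) set" where
  "tdual = {\<phi>. linear \<phi> \<and> continuous_on UNIV \<phi>}"

definition cX :: "'x::{real_vector,topological_space} set set" where
  "cX = {C. C \<noteq> {} \<and> closed C \<and> convex C}"

definition supp :: "('x \<Rightarrow> real) \<Rightarrow> 'x set \<Rightarrow> ereal" where
  "supp x' C = (SUP x\<in>C. ereal (x' x))"

definition sf_signed_measure :: "'w measure \<Rightarrow> ('w set \<Rightarrow> ereal) \<Rightarrow> bool" where
  "sf_signed_measure M \<nu> \<longleftrightarrow>
     \<nu> {} = 0 \<and>
     (\<forall>E\<in>sets M. \<nu> E \<noteq> -\<infinity>) \<and>
     (\<forall>A::nat \<Rightarrow> 'w set. range A \<subseteq> sets M \<longrightarrow> disjoint_family A \<longrightarrow>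
          (\<lambda>n. \<nu> (A n)) sums \<nu> (\<Union>n. A n)) \<and>
     (\<exists>A::nat \<Rightarrow> 'w set. range A \<subseteq> sets M \<and> (\<Union>n. A n) = space M \<and> (\<forall>n. \<nu> (A n) \<noteq> \<infinity>))"

definition pos_var :: "'w measure \<Rightarrow> ('w set \<Rightarrow> ereal) \<Rightarrow> 'w measure" where
  "pos_var M \<nu> = measure_of (space M) (sets M)
     (\<lambda>E. e2ennreal (SUP F\<in>{F\<in>sets M. F \<subseteq> E}. \<nu> F))"

definition neg_var :: "'w measure \<Rightarrow> ('w set \<Rightarrow> ereal) \<Rightarrow> 'w measure" where
  "neg_var M \<nu> = measure_of (space M) (sets M)
     (\<lambda>E. e2ennreal (SUP F\<in>{F\<in>sets M. F \<subseteq> E}. - \<nu> F))"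

definition sint_pos :: "'w measure \<Rightarrow> ('w set \<Rightarrow> ereal) \<Rightarrow> 'w set \<Rightarrow> ('w \<Rightarrow> real) \<Rightarrow> ennreal" where
  "sint_pos M \<nu> E h = (\<integral>\<^sup>+ x. ennreal (h x) * indicator E x \<partial>pos_var M \<nu>)"

definition sint_neg :: "'w measure \<Rightarrow> ('w set \<Rightarrow> ereal) \<Rightarrow> 'w set \<Rightarrow> ('w \<Rightarrow> real) \<Rightarrow> ennreal" where
  "sint_neg M \<nu> E h = (\<integral>\<^sup>+ x. ennreal (h x) * indicator E x \<partial>neg_var M \<nu>)"

definition sint_ok :: "'w measure \<Rightarrow> ('w set \<Rightarrow> ereal) \<Rightarrow> 'w set \<Rightarrow> ('w \<Rightarrow> real) \<Rightarrow> bool" where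
  "sint_ok M \<nu> E h \<longleftrightarrow> \<not> (sint_pos M \<nu> E h = \<infinity> \<and> sint_neg M \<nu> E h = \<infinity>)"

definition sint :: "'w measure \<Rightarrow> ('w set \<Rightarrow> ereal) \<Rightarrow> 'w set \<Rightarrow> ('w \<Rightarrow> real) \<Rightarrow> ereal" where
  "sint M \<nu> E h = enn2ereal (sint_pos M \<nu> E h) - enn2ereal (sint_neg M \<nu> E h)"

definition multimeasure :: "'w measure \<Rightarrow> ('w set \<Rightarrow> 'x::{real_vector,topological_space} set) \<Rightarrow> bool" where
  "multimeasure M N \<longleftrightarrow>
     (\<forall>E\<in>sets M. N E \<in> cX) \<and>
     (\<forall>x'\<in>tdual. sf_signed_measure M (\<lambda>E. supp x' (N E)))"

definition pos_multimeasure :: "'w measure \<Rightarrow> ('w set \<Rightarrow> 'x::{real_vector,topological_space} set) \<Rightarrow> bool" where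
  "pos_multimeasure M N \<longleftrightarrow> multimeasure M N \<and> (\<forall>E\<in>sets M. 0 \<in> N E)"

definition bds_expr :: "'w measure \<Rightarrow> ('w set \<Rightarrow> 'x::{real_vector,topological_space} set) \<Rightarrow> ('w \<Rightarrow> real)
    \<Rightarrow> 'w set \<Rightarrow> ('x \<Rightarrow> real) \<Rightarrow> ereal" where
  "bds_expr M N f E x' =
     sint M (\<lambda>F. supp x' (N F)) E (\<lambda>w. max (f w) 0) +
     sint M (\<lambda>F. supp x' (uminus ` N F)) E (\<lambda>w. max (- f w) 0)"

definition bds_expr_ok :: "'w measure \<Rightarrow> ('w set \<Rightarrow> 'x::{real_vector,topological_space} set) \<Rightarrow> ('w \<Rightarrow> real)
    \<Rightarrow> 'w set \<Rightarrow> ('x \<Rightarrow> real) \<Rightarrow> bool" where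
  "bds_expr_ok M N f E x' \<longleftrightarrow>
     sint_ok M (\<lambda>F. supp x' (N F)) E (\<lambda>w. max (f w) 0) \<and>
     sint_ok M (\<lambda>F. supp x' (uminus ` N F)) E (\<lambda>w. max (- f w) 0) \<and>
     \<not> (sint M (\<lambda>F. supp x' (N F)) E (\<lambda>w. max (f w) 0) = \<infinity> \<and>
        sint M (\<lambda>F. supp x' (uminus ` N F)) E (\<lambda>w. max (- f w) 0) = -\<infinity>) \<and>
     \<not> (sint M (\<lambda>F. supp x' (N F)) E (\<lambda>w. max (f w) 0) = -\<infinity> \<and>
        sint M (\<lambda>F. supp x' (uminus ` N F)) E (\<lambda>w. max (- f w) 0) = \<infinity>)"

definition bdsm_integrable :: "'w measure \<Rightarrow> ('w set \<Rightarrow> 'x::{real_vector,topological_space} set) \<Rightarrow> ('w \<Rightarrow> real) \<Rightarrow> bool" where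
  "bdsm_integrable M N f \<longleftrightarrow>
     f \<in> borel_measurable M \<and>
     (\<forall>E\<in>sets M. \<forall>x'\<in>tdual. bds_expr_ok M N f E x') \<and>
     (\<forall>E\<in>sets M. \<exists>C\<in>cX. \<forall>x'\<in>tdual. supp x' C = bds_expr M N f E x')"

text \<open>The integral \<open>\<integral>_E f dN = M_f(E)\<close> (unique by Hahn-Banach; we pick it by choice).\<close>
definition bdsm_integral :: "'w measure \<Rightarrow> ('w set \<Rightarrow> 'x::{real_vector,topological_space} set) \<Rightarrow> ('w \<Rightarrow> real) \<Rightarrow> 'w set \<Rightarrow> 'x set" where
  "bdsm_integral M N f E = (SOME C. C \<in> cX \<and> (\<forall>x'\<in>tdual. supp x' C = bds_expr M N f E x'))"

end

theory Submission
  imports Defs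
begin

text \<open>If \<open>0 \<in> N E\<close> for all \<open>E\<close>, every support function \<open>s(x', N \<cdot>)\<close> and \<open>s(x', -N \<cdot>)\<close> is a
  nonnegative measure, so its negative variation vanishes and the \<open>BDS\<^sub>m\<close> expression becomes
  \<open>\<integral>\<^sub>E f\<^sup>+ dP + \<integral>\<^sub>E f\<^sup>- dQ\<close> for two ordinary measures \<open>P\<close>, \<open>Q\<close>.  Both integrals are sublinear in
  \<open>f\<close> because \<open>(a f + b g)\<^sup>\<plusminus> \<le> a f\<^sup>\<plusminus> + b g\<^sup>\<plusminus>\<close> for \<open>a, b \<ge> 0\<close>.\<close>

lemma sets_pos_var [simp]: "sets (pos_var M \<nu>) = sets M"
  unfolding pos_var_def by (simp add: sets_measure_of[OF sets.space_closed])

lemma neg_var_nonneg_eq_null_measure: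
  assumes "\<forall>F\<in>sets M. \<nu> F \<ge> 0"
  shows "neg_var M \<nu> = null_measure M"
proof -
  have "(\<lambda>E. e2ennreal (SUP F\<in>{F\<in>sets M. F \<subseteq> E}. - \<nu> F)) = (\<lambda>_. 0)"
  proof
    fix E
    have "(SUP F\<in>{F\<in>sets M. F \<subseteq> E}. - \<nu> F) \<le> 0"
      using assms by (intro SUP_least) (auto simp: ereal_uminus_le_reorder)
    then show "e2ennreal (SUP F\<in>{F\<in>sets M. F \<subseteq> E}. - \<nu> F) = 0"
      by (rule e2ennreal_neg)
  qed
  then show ?thesis unfolding neg_var_def null_measure_def by simp
qed

lemma sint_nonneg_eq_nn_integral:
  assumes "\<forall>F\<in>sets M. \<nu> F \<ge> 0"
  shows "sint M \<nu> E h = enn2ereal (\<integral>\<^sup>+ x. ennreal (h x) * indicator E x \<partial>pos_var M \<nu>)"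
  unfolding sint_def sint_neg_def sint_pos_def neg_var_nonneg_eq_null_measure[OF assms]
  by (simp add: zero_ennreal.rep_eq)

lemma supp_nonneg_if_zero_mem:
  assumes "linear x'" "0 \<in> C"
  shows "supp x' C \<ge> 0"
proof -
  have "ereal (x' 0) \<le> supp x' C"
    unfolding supp_def using assms(2) by (rule SUP_upper)
  then show ?thesis
    using linear_0[OF assms(1)] by (simp add: zero_ereal_def)
qed

lemma bds_expr_pos_multimeasure:
  assumes "pos_multimeasure M N" "linear x'"
  shows "bds_expr M N h E x' =
    enn2ereal ((\<integral>\<^sup>+ w. ennreal (max (h w) 0) * indicator E w \<partial>pos_var M (\<lambda>F. supp x' (N F)))
             + (\<integral>\<^sup>+ w. ennreal (max (- h w) 0) * indicator E w \<partial>pos_var M (\<lambda>F. supp x' (uminus ` N F))))"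
proof -
  have zero_mem: "\<forall>F\<in>sets M. 0 \<in> N F"
    using assms(1) by (simp add: pos_multimeasure_def)
  then have "\<forall>F\<in>sets M. supp x' (N F) \<ge> 0"
    using assms(2) supp_nonneg_if_zero_mem by blast
  moreover have "\<forall>F\<in>sets M. supp x' (uminus ` N F) \<ge> 0"
    using zero_mem assms(2) supp_nonneg_if_zero_mem by (metis image_eqI neg_0_equal_iff_equal)
  ultimately show ?thesis
    unfolding bds_expr_def by (simp add: sint_nonneg_eq_nn_integral plus_ennreal.rep_eq)
qed

lemma nn_integral_pos_part_sublinear:
  assumes "sets P = sets M" "u \<in> borel_measurable M" "v \<in> borel_measurable M"
    and "E \<in> sets M" "a \<ge> 0" "b \<ge> 0"
  shows "(\<integral>\<^sup>+ x. ennreal (max (a * u x + b * v x) 0) * indicator E x \<partial>P)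
     \<le> ennreal a * (\<integral>\<^sup>+ x. ennreal (max (u x) 0) * indicator E x \<partial>P)
       + ennreal b * (\<integral>\<^sup>+ x. ennreal (max (v x) 0) * indicator E x \<partial>P)"
proof -
  have measurable: "u \<in> borel_measurable P" "v \<in> borel_measurable P"
    using assms(1-3) measurable_cong_sets by blast+
  have "(\<integral>\<^sup>+ x. ennreal (max (a * u x + b * v x) 0) * indicator E x \<partial>P)
     \<le> (\<integral>\<^sup>+ x. ennreal a * (ennreal (max (u x) 0) * indicator E x)
            + ennreal b * (ennreal (max (v x) 0) * indicator E x) \<partial>P)"
  proof (rule nn_integral_mono)
    fix x
    have "max (a * u x + b * v x) 0 \<le> a * max (u x) 0 + b * max (v x) 0"
      using assms(5,6) by (intro max.boundedI add_mono mult_left_mono) auto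
    then have "ennreal (max (a * u x + b * v x) 0) \<le> ennreal (a * max (u x) 0 + b * max (v x) 0)"
      by (rule ennreal_leI)
    also have "\<dots> = ennreal a * ennreal (max (u x) 0) + ennreal b * ennreal (max (v x) 0)"
      using assms(5,6) by (simp add: ennreal_plus[symmetric] ennreal_mult)
    finally show "ennreal (max (a * u x + b * v x) 0) * indicator E x
       \<le> ennreal a * (ennreal (max (u x) 0) * indicator E x)
            + ennreal b * (ennreal (max (v x) 0) * indicator E x)"
      by (cases "x \<in> E") auto
  qed
  also have "\<dots> = ennreal a * (\<integral>\<^sup>+ x. ennreal (max (u x) 0) * indicator E x \<partial>P)
       + ennreal b * (\<integral>\<^sup>+ x. ennreal (max (v x) 0) * indicator E x \<partial>P)"
    using measurable assms(1,4) by (simp add: nn_integral_add nn_integral_cmult)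
  finally show ?thesis .
qed

lemma enn2ereal_le_nonneg_combination:
  assumes "0 \<le> a" "0 \<le> b" "X \<le> ennreal a * Y + ennreal b * Z"
  shows "enn2ereal X \<le> ereal a * enn2ereal Y + ereal b * enn2ereal Z"
proof -
  have "enn2ereal X \<le> enn2ereal (ennreal a * Y + ennreal b * Z)"
    using assms(3) by (simp add: less_eq_ennreal.rep_eq)
  also have "\<dots> = ereal a * enn2ereal Y + ereal b * enn2ereal Z"
    using assms(1,2) by (simp add: plus_ennreal.rep_eq times_ennreal.rep_eq)
  finally show ?thesis .
qed

lemma bds_expr_sublinear:
  assumes "pos_multimeasure M N" "linear x'"
    and "f \<in> borel_measurable M" "g \<in> borel_measurable M"
    and "E \<in> sets M" "a \<ge> 0" "b \<ge> 0"
  shows "bds_expr M N (\<lambda>w. a * f w + b * g w) E x'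
    \<le> ereal a * bds_expr M N f E x' + ereal b * bds_expr M N g E x'"
proof -
  define P where "P = pos_var M (\<lambda>F. supp x' (N F))"
  define Q where "Q = pos_var M (\<lambda>F. supp x' (uminus ` N F))"
  define I where "I R h = (\<integral>\<^sup>+ w. ennreal (max (h w) 0) * indicator E w \<partial>R)" for R h
  have pos: "I P (\<lambda>w. a * f w + b * g w) \<le> ennreal a * I P f + ennreal b * I P g"
    unfolding I_def P_def using assms by (intro nn_integral_pos_part_sublinear) auto
  have "I Q (\<lambda>w. a * - f w + b * - g w)
      \<le> ennreal a * I Q (\<lambda>w. - f w) + ennreal b * I Q (\<lambda>w. - g w)"
    unfolding I_def Q_def using assms by (intro nn_integral_pos_part_sublinear) auto
  then have neg: "I Q (\<lambda>w. - (a * f w + b * g w))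
      \<le> ennreal a * I Q (\<lambda>w. - f w) + ennreal b * I Q (\<lambda>w. - g w)"
    by simp
  have "I P (\<lambda>w. a * f w + b * g w) + I Q (\<lambda>w. - (a * f w + b * g w))
      \<le> ennreal a * (I P f + I Q (\<lambda>w. - f w)) + ennreal b * (I P g + I Q (\<lambda>w. - g w))"
    using add_mono[OF pos neg] by (simp add: algebra_simps)
  with assms(6,7) show ?thesis
    unfolding bds_expr_pos_multimeasure[OF assms(1,2)]
    unfolding P_def[symmetric] Q_def[symmetric] I_def[symmetric]
    by (rule enn2ereal_le_nonneg_combination)
qed

lemma supp_bdsm_integral:
  assumes "bdsm_integrable M N h" "E \<in> sets M" "x' \<in> tdual"
  shows "supp x' (bdsm_integral M N h E) = bds_expr M N h E x'"
proof -
  obtain C where "C \<in> cX \<and> (\<forall>x'\<in>tdual. supp x' C = bds_expr M N h E x')"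
    using assms(1,2) unfolding bdsm_integrable_def by blast
  then have "bdsm_integral M N h E \<in> cX
      \<and> (\<forall>x'\<in>tdual. supp x' (bdsm_integral M N h E) = bds_expr M N h E x')"
    unfolding bdsm_integral_def by (rule someI)
  then show ?thesis using assms(3) by blast
qed

theorem proposition2p6:
  fixes M :: "'w measure" and N :: "'w set \<Rightarrow> 'x::{real_vector,t2_space} set"
    and f g :: "'w \<Rightarrow> real" and a b :: real
  assumes "hlcs TYPE('x)"
    and "pos_multimeasure M N"
    and "f \<in> borel_measurable M" and "g \<in> borel_measurable M"
    and "bdsm_integrable M N f" and "bdsm_integrable M N g"
    and "a \<ge> 0" and "b \<ge> 0"
    and "bdsm_integrable M N (\<lambda>w. a * f w + b * g w)"
  shows "\<forall>E\<in>sets M. \<forall>x'\<in>tdual.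
           supp x' (bdsm_integral M N (\<lambda>w. a * f w + b * g w) E)
             \<le> ereal a * supp x' (bdsm_integral M N f E) + ereal b * supp x' (bdsm_integral M N g E)"
proof (intro ballI)
  fix E and x' :: "'x \<Rightarrow> real"
  assume E: "E \<in> sets M" and x': "x' \<in> tdual"
  have "linear x'"
    using x' by (simp add: tdual_def)
  show "supp x' (bdsm_integral M N (\<lambda>w. a * f w + b * g w) E)
      \<le> ereal a * supp x' (bdsm_integral M N f E) + ereal b * supp x' (bdsm_integral M N g E)"
    unfolding supp_bdsm_integral[OF assms(9) E x'] supp_bdsm_integral[OF assms(5) E x']
      supp_bdsm_integral[OF assms(6) E x']
    by (rule bds_expr_sublinear[OF assms(2) \<open>linear x'\<close> assms(3,4) E assms(7,8)])
qed

end
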